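(* Let $\mathcal{N}$ be a sound, acyclic, deterministic negotiation and $B\subseteq N$, and suppose Eve has a deterministic positional winning strategy $\sigma$ in the game $G(\mathcal{N},B)$. Let $S$ be the set of nodes of $\mathcal{N}$ that are reached on some play from $n_{\mathit{init}}$ respecting $\sigma$. Then there exists a successful run of $\mathcal{N}$ whose set of occurring nodes is precisely $S$.
   Context: A negotiation is a tuple $\mathcal{N}=(\mathit{Proc},N,\mathit{dom},R,\delta)$ where $\mathit{Proc}$ is a finite set of processes, $N$ is a finite set of nodes, $\mathit{dom}:N\to 2^{\mathit{Proc}}\setminus\{\emptyset\}$, there are two distinguished nodes $n_{\mathit{init}},n_{\mathit{fin}}$ with $\mathit{dom}(n_{\mathit{init}})=\mathit{dom}(n_{\mathit{fin}})=\mathit{Proc}$, $R$ is a set of results, each node $n$ has a set $\mathit{out}(n)\subseteq R$ of results (nonempty for $n\neq n_{\mathit{fin}}$), and $\delta(n,a,p)\subseteq N$ is defined and nonempty exactly when $a\in\mathit{out}(n)$ and $p\in\mathit{dom}(n)$, with $p\in\mathit{dom}(n')$ for all $n'\in\delta(n,a,p)$. $\mathcal{N}$ is deterministic if every $\delta(n,a,p)$ is a singleton, identified with its element. A configuration is a map $C$ assigning to each process a nonempty set of nodes; $C_{\mathit{init}}(p)=\{n_{\mathit{init}}\}$, $C_{\mathit{fin}}(p)=\{n_{\mathit{fin}}\}$. A node $n$ is enabled in $C$ if $n\in C(p)$ for all $p\in\mathit{dom}(n)$. If $n$ is enabled and $a\in\mathit{out}(n)$ then $C\xrightarrow{(n,a)}C'$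 with $C'(p)=\delta(n,a,p)$ for $p\in\mathit{dom}(n)$, $C'(p)=C(p)$ otherwise. A run is a sequence $(n_1,a_1)(n_2,a_2)\cdots$ of such steps; a successful run is a finite run from $C_{\mathit{init}}$ to $C_{\mathit{fin}}$; $\mathcal{N}$ is sound if every finite run from $C_{\mathit{init}}$ can be extended to a successful run. The graph of $\mathcal{N}$ has vertex set $N$ and edges $n\to n'$ whenever $n'\in\delta(n,a,p)$ for some $a,p$; $\mathcal{N}$ is acyclic if this graph is. The two-player game $G(\mathcal{N},B)$ (players Eve and Adam) for deterministic $\mathcal{N}$ and $B\subseteq N$: Eve's positions are $N\setminus B$, Adam's positions are $N\times R$; the moves are $n\to(n,a)$ for $n\in N\setminus B$, $a\in\mathit{out}(n)$, and $(n,a)\to\delta(n,a,p)$ for $n\in N$, $a\in\mathit{out}(n)$, $p\in\mathit{dom}(n)$. The initial position is $n_{\mathit{init}}$; a play is a maximal path from it. Adam wins a play if it reaches a node of $B$; Eve wins if it reaches $n_{\mathit{fin}}$. A deterministic positional strategy for Eve is a function $\sigma:N\to R$ (with $\sigma(n)\in\mathit{out}(n)$); a play respects $\sigma$ if from each Eve position $n$ it moves to $(n,\sigma(n))$; $\sigma$ is winning if every play from $n_{\mathit{init}}$ respecting $\sigma$ is won by Eve. *)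

theory Defs
  imports Main
begin

record ('p, 'n, 'r) nego =
  Proc  :: "'p set"
  Nodes :: "'n set"
  ndom  :: "'n \<Rightarrow> 'p set"
  ninit :: 'n
  nfin  :: 'n
  Res   :: "'r set"
  out   :: "'n \<Rightarrow> 'r set"
  delta :: "'n \<Rightarrow> 'r \<Rightarrow> 'p \<Rightarrow> 'n set"

definition negotiation :: "('p, 'n, 'r) nego \<Rightarrow> bool" where
  "negotiation \<N> \<longleftrightarrow>
     finite (Proc \<N>) \<and> finite (Nodes \<N>) \<and>
     ninit \<N> \<in> Nodes \<N> \<and> nfin \<N> \<in> Nodes \<N> \<and>
     (\<forall>n\<in>Nodes \<N>. ndom \<N> n \<subseteq> Proc \<N> \<and> ndom \<N> n \<noteq> {}) \<and>
     ndom \<N> (ninit \<N>) = Proc \<N> \<and> ndom \<N> (nfin \<N>) = Proc \<N> \<and>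
     (\<forall>n\<in>Nodes \<N>. out \<N> n \<subseteq> Res \<N>) \<and>
     (\<forall>n\<in>Nodes \<N>. n \<noteq> nfin \<N> \<longrightarrow> out \<N> n \<noteq> {}) \<and>
     (\<forall>n\<in>Nodes \<N>. \<forall>a p. delta \<N> n a p \<noteq> {} \<longleftrightarrow> a \<in> out \<N> n \<and> p \<in> ndom \<N> n) \<and>
     (\<forall>n\<in>Nodes \<N>. \<forall>a\<in>out \<N> n. \<forall>p\<in>ndom \<N> n.
        delta \<N> n a p \<subseteq> Nodes \<N> \<and> (\<forall>n'\<in>delta \<N> n a p. p \<in> ndom \<N> n'))"

definition deterministic :: "('p, 'n, 'r) nego \<Rightarrow> bool" where
  "deterministic \<N> \<longleftrightarrow>
     (\<forall>n\<in>Nodes \<N>. \<forall>a\<in>out \<N> n. \<forall>p\<in>ndom \<N> n. \<exists>n'. delta \<N> n a p = {n'})"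

text \<open>Configurations: maps from processes to sets of nodes (only values on Proc matter).\<close>
type_synonym ('p, 'n) config = "'p \<Rightarrow> 'n set"

definition C_init :: "('p, 'n, 'r) nego \<Rightarrow> ('p, 'n) config" where
  "C_init \<N> = (\<lambda>p. {ninit \<N>})"

definition is_C_fin :: "('p, 'n, 'r) nego \<Rightarrow> ('p, 'n) config \<Rightarrow> bool" where
  "is_C_fin \<N> C \<longleftrightarrow> (\<forall>p\<in>Proc \<N>. C p = {nfin \<N>})"

definition enabled :: "('p, 'n, 'r) nego \<Rightarrow> ('p, 'n) config \<Rightarrow> 'n \<Rightarrow> bool" where
  "enabled \<N> C n \<longleftrightarrow> n \<in> Nodes \<N> \<and> (\<forall>p\<in>ndom \<N> n. n \<in> C p)"

definition step :: "('p, 'n, 'r) nego \<Rightarrow> ('p, 'n) config \<Rightarrow> 'n \<times> 'r \<Rightarrow> ('p, 'n) config \<Rightarrow> bool" where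
  "step \<N> C x C' \<longleftrightarrow> (case x of (n, a) \<Rightarrow>
     enabled \<N> C n \<and> a \<in> out \<N> n \<and>
     C' = (\<lambda>p. if p \<in> ndom \<N> n then delta \<N> n a p else C p))"

fun run :: "('p, 'n, 'r) nego \<Rightarrow> ('p, 'n) config \<Rightarrow> ('n \<times> 'r) list \<Rightarrow> ('p, 'n) config \<Rightarrow> bool" where
  "run \<N> C [] C' \<longleftrightarrow> C' = C"
| "run \<N> C (x # w) C'' \<longleftrightarrow> (\<exists>C'. step \<N> C x C' \<and> run \<N> C' w C'')"

definition successful_run :: "('p, 'n, 'r) nego \<Rightarrow> ('n \<times> 'r) list \<Rightarrow> bool" where
  "successful_run \<N> w \<longleftrightarrow> (\<exists>C. run \<N> (C_init \<N>) w C \<and> is_C_fin \<N> C)"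

definition sound :: "('p, 'n, 'r) nego \<Rightarrow> bool" where
  "sound \<N> \<longleftrightarrow> (\<forall>w C. run \<N> (C_init \<N>) w C \<longrightarrow> (\<exists>w'. successful_run \<N> (w @ w')))"

definition graph_edges :: "('p, 'n, 'r) nego \<Rightarrow> ('n \<times> 'n) set" where
  "graph_edges \<N> = {(n, n'). n \<in> Nodes \<N> \<and>
      (\<exists>a\<in>out \<N> n. \<exists>p\<in>ndom \<N> n. n' \<in> delta \<N> n a p)}"

definition acyclic_nego :: "('p, 'n, 'r) nego \<Rightarrow> bool" where
  "acyclic_nego \<N> \<longleftrightarrow> acyclic (graph_edges \<N>)"

text \<open>Nodes occurring in a run: the executed nodes together with the final node,
  equivalently, the nodes appearing in the configurations along a successful run.\<close>
definition run_nodes :: "('p, 'n, 'r) nego \<Rightarrow> ('n \<times> 'r) list \<Rightarrow> 'n set" where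
  "run_nodes \<N> w = insert (nfin \<N>) (fst ` set w)"

datatype ('n, 'r) pos = EveP 'n | AdamP 'n 'r

definition game_move :: "('p, 'n, 'r) nego \<Rightarrow> 'n set \<Rightarrow> ('n, 'r) pos \<Rightarrow> ('n, 'r) pos \<Rightarrow> bool" where
  "game_move \<N> B x y \<longleftrightarrow> (case x of
       EveP n \<Rightarrow> n \<in> Nodes \<N> - B \<and> (\<exists>a\<in>out \<N> n. y = AdamP n a)
     | AdamP n a \<Rightarrow> n \<in> Nodes \<N> \<and> a \<in> out \<N> n \<and>
                    (\<exists>p\<in>ndom \<N> n. \<exists>n'. n' \<in> delta \<N> n a p \<and> y = EveP n'))"

definition fin_play :: "('p, 'n, 'r) nego \<Rightarrow> 'n set \<Rightarrow> ('n, 'r) pos list \<Rightarrow> bool" where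
  "fin_play \<N> B xs \<longleftrightarrow> xs \<noteq> [] \<and> hd xs = EveP (ninit \<N>) \<and>
     (\<forall>i. Suc i < length xs \<longrightarrow> game_move \<N> B (xs ! i) (xs ! Suc i)) \<and>
     (\<forall>y. \<not> game_move \<N> B (last xs) y)"

definition inf_play :: "('p, 'n, 'r) nego \<Rightarrow> 'n set \<Rightarrow> (nat \<Rightarrow> ('n, 'r) pos) \<Rightarrow> bool" where
  "inf_play \<N> B f \<longleftrightarrow> f 0 = EveP (ninit \<N>) \<and> (\<forall>i. game_move \<N> B (f i) (f (Suc i)))"

definition fin_respects :: "('n \<Rightarrow> 'r) \<Rightarrow> ('n, 'r) pos list \<Rightarrow> bool" where
  "fin_respects \<sigma> xs \<longleftrightarrow>
     (\<forall>i n. Suc i < length xs \<longrightarrow> xs ! i = EveP n \<longrightarrow> xs ! Suc i = AdamP n (\<sigma> n))"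

definition inf_respects :: "('n \<Rightarrow> 'r) \<Rightarrow> (nat \<Rightarrow> ('n, 'r) pos) \<Rightarrow> bool" where
  "inf_respects \<sigma> f \<longleftrightarrow> (\<forall>i n. f i = EveP n \<longrightarrow> f (Suc i) = AdamP n (\<sigma> n))"

definition eve_wins :: "('p, 'n, 'r) nego \<Rightarrow> 'n set \<Rightarrow> ('n, 'r) pos set \<Rightarrow> bool" where
  "eve_wins \<N> B P \<longleftrightarrow> EveP (nfin \<N>) \<in> P \<and> (\<forall>b\<in>B. EveP b \<notin> P)"

definition det_pos_strategy :: "('p, 'n, 'r) nego \<Rightarrow> ('n \<Rightarrow> 'r) \<Rightarrow> bool" where
  "det_pos_strategy \<N> \<sigma> \<longleftrightarrow> (\<forall>n\<in>Nodes \<N>. out \<N> n \<noteq> {} \<longrightarrow> \<sigma> n \<in> out \<N> n)"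

definition winning_strategy :: "('p, 'n, 'r) nego \<Rightarrow> 'n set \<Rightarrow> ('n \<Rightarrow> 'r) \<Rightarrow> bool" where
  "winning_strategy \<N> B \<sigma> \<longleftrightarrow> det_pos_strategy \<N> \<sigma> \<and>
     (\<forall>xs. fin_play \<N> B xs \<and> fin_respects \<sigma> xs \<longrightarrow> eve_wins \<N> B (set xs)) \<and>
     (\<forall>f. inf_play \<N> B f \<and> inf_respects \<sigma> f \<longrightarrow> eve_wins \<N> B (range f))"

definition reached_nodes :: "('p, 'n, 'r) nego \<Rightarrow> 'n set \<Rightarrow> ('n \<Rightarrow> 'r) \<Rightarrow> 'n set" where
  "reached_nodes \<N> B \<sigma> =
     {n. \<exists>xs. fin_play \<N> B xs \<and> fin_respects \<sigma> xs \<and> EveP n \<in> set xs} \<union>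
     {n. \<exists>f. inf_play \<N> B f \<and> inf_respects \<sigma> f \<and> EveP n \<in> range f}"

end

theory Submission
  imports Defs
begin

text \<open>Let \<open>R\<close> be the least set of nodes containing \<open>n_init\<close> and closed under the
  \<open>\<sigma>\<close>-successors of its nodes outside \<open>B\<close>. Every play respecting \<open>\<sigma>\<close> stays in \<open>R\<close>,
  and conversely every prefix of such a play extends to a maximal one, so \<open>R\<close> is exactly the
  set \<open>S\<close> of reached nodes and, \<open>\<sigma>\<close> being winning, avoids \<open>B\<close>.

  Now fire \<open>\<sigma>\<close>-moves from the initial configuration. By determinism every process sits on a
  single node of \<open>R\<close>; by soundness some node is enabled until the final configuration is
  reached, and such a node lies in \<open>R\<close>; by acyclicity the number of descendants of the
  occupied nodes decreases. The resulting successful run only fires nodes of \<open>R\<close>, and it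
  fires every node of \<open>R\<close> other than \<open>n_fin\<close>, since a process placed on a node must
  leave it again before reaching \<open>n_fin\<close>.\<close>

lemma run_append: "run N C (u @ v) C'' \<longleftrightarrow> (\<exists>C'. run N C u C' \<and> run N C' v C'')"
  by (induction u arbitrary: C) auto

lemma run_unique: "run N C w C1 \<Longrightarrow> run N C w C2 \<Longrightarrow> C1 = C2"
proof (induction w arbitrary: C)
  case (Cons x w)
  then obtain D1 D2 where "step N C x D1" "run N D1 w C1" "step N C x D2" "run N D2 w C2"
    by auto
  moreover from this have "D1 = D2" by (auto simp: step_def split: prod.splits)
  ultimately show ?case using Cons.IH by blast
qed simp

lemma run_moves_process:
  assumes "run N C w C'" and "C' p \<noteq> C p"
  shows "\<exists>x\<in>set w. fst x \<in> C p \<and> p \<in> ndom N (fst x)"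
  using assms
proof (induction w arbitrary: C)
  case Nil
  then show ?case by simp
next
  case (Cons x w)
  obtain n a where x: "x = (n, a)" by (cases x)
  from Cons.prems obtain D where st: "step N C (n, a) D" and r: "run N D w C'"
    using x by auto
  show ?case
  proof (cases "p \<in> ndom N n")
    case True
    with st have "n \<in> C p" by (auto simp: step_def enabled_def)
    with True x show ?thesis by auto
  next
    case False
    with st have "D p = C p" by (auto simp: step_def)
    with Cons.IH[OF r] Cons.prems(2) show ?thesis by auto
  qed
qed

definition descendants :: "('p, 'n, 'r) nego \<Rightarrow> 'n \<Rightarrow> 'n set" where
  "descendants N n = {k. (n, k) \<in> (graph_edges N)\<^sup>+}"

lemma run_preserves_descendants:
  assumes "run N C w C'" and "C p \<subseteq> descendants N z"
  shows "C' p \<subseteq> descendants N z"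
  using assms
proof (induction w arbitrary: C)
  case Nil
  then show ?case by simp
next
  case (Cons x w)
  obtain n a where x: "x = (n, a)" by (cases x)
  from Cons.prems obtain D where st: "step N C (n, a) D" and r: "run N D w C'"
    using x by auto
  have "D p \<subseteq> descendants N z"
  proof (cases "p \<in> ndom N n")
    case True
    with st have "(z, n) \<in> (graph_edges N)\<^sup>+" and "\<forall>k\<in>D p. (n, k) \<in> graph_edges N"
      using Cons.prems(2) by (auto simp: step_def enabled_def graph_edges_def descendants_def)
    then show ?thesis by (auto simp: descendants_def intro: trancl_into_trancl)
  next
    case False
    with st Cons.prems(2) show ?thesis by (auto simp: step_def)
  qed
  with Cons.IH r show ?case by blast
qed

lemma delta_memberD:
  assumes "negotiation N" and "n \<in> Nodes N" and "n' \<in> delta N n a p"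
  shows "a \<in> out N n \<and> p \<in> ndom N n"
proof -
  have "\<forall>n\<in>Nodes N. \<forall>a p. delta N n a p \<noteq> {} \<longleftrightarrow> a \<in> out N n \<and> p \<in> ndom N n"
    using assms(1) unfolding negotiation_def by (elim conjE)
  with assms(2,3) show ?thesis by blast
qed

lemma delta_subset_Nodes:
  assumes "negotiation N" and "n \<in> Nodes N"
  shows "delta N n a p \<subseteq> Nodes N"
proof
  fix k assume k: "k \<in> delta N n a p"
  have "\<forall>n\<in>Nodes N. \<forall>a\<in>out N n. \<forall>p\<in>ndom N n. delta N n a p \<subseteq> Nodes N"
    using assms(1) unfolding negotiation_def by (elim conjE) blast
  with delta_memberD[OF assms k] assms(2) k show "k \<in> Nodes N" by blast
qed

lemma ndom_subset_Proc: "negotiation N \<Longrightarrow> n \<in> Nodes N \<Longrightarrow> ndom N n \<subseteq> Proc N"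
  unfolding negotiation_def by (elim conjE) simp

lemma ndom_nonempty: "negotiation N \<Longrightarrow> n \<in> Nodes N \<Longrightarrow> ndom N n \<noteq> {}"
  unfolding negotiation_def by (elim conjE) simp

lemma out_nonempty: "negotiation N \<Longrightarrow> n \<in> Nodes N \<Longrightarrow> n \<noteq> nfin N \<Longrightarrow> out N n \<noteq> {}"
  unfolding negotiation_def by (elim conjE) simp

lemma Proc_nonempty: "negotiation N \<Longrightarrow> Proc N \<noteq> {}"
  using ndom_nonempty[of N "ninit N"] unfolding negotiation_def by (elim conjE) simp

lemma graph_edges_subset: "negotiation N \<Longrightarrow> graph_edges N \<subseteq> Nodes N \<times> Nodes N"
  unfolding graph_edges_def using delta_subset_Nodes by fast

lemma deterministic_delta:
  assumes "deterministic N" and "n \<in> Nodes N" and "a \<in> out N n" and "p \<in> ndom N n"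
    and "n' \<in> delta N n a p"
  shows "delta N n a p = {n'}"
  using assms unfolding deterministic_def by fastforce

lemma card_descendants_less:
  assumes "negotiation N" and "acyclic_nego N" and "(n, n') \<in> graph_edges N"
  shows "card (descendants N n') < card (descendants N n)"
proof (rule psubset_card_mono)
  have "(graph_edges N)\<^sup>+ \<subseteq> Nodes N \<times> Nodes N"
    using graph_edges_subset[OF assms(1)] by (rule trancl_subset_Sigma)
  then show "finite (descendants N n)"
    using assms(1) unfolding descendants_def negotiation_def by (auto intro: finite_subset)
  have "n' \<notin> descendants N n'"
    using assms(2) unfolding acyclic_nego_def acyclic_def descendants_def by blast
  with assms(3) show "descendants N n' \<subset> descendants N n"
    unfolding descendants_def by (auto intro: trancl_into_trancl2)
qed

lemma sound_reachable_completes: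
  assumes "sound N" and "run N (C_init N) w C"
  obtains w' C' where "run N C w' C'" and "is_C_fin N C'"
proof -
  from assms obtain w' C' where "run N (C_init N) (w @ w') C'" and "is_C_fin N C'"
    unfolding sound_def successful_run_def by blast
  with assms(2) that show ?thesis by (metis run_append run_unique)
qed

lemma sound_reachable_enabled:
  assumes "sound N" and "run N (C_init N) w C" and "\<not> is_C_fin N C"
  shows "\<exists>n. enabled N C n"
proof -
  obtain w' C' where "run N C w' C'" and "is_C_fin N C'"
    using sound_reachable_completes[OF assms(1,2)] .
  with assms(3) obtain x w'' D where "w' = x # w''" and "step N C x D"
    by (cases w') auto
  then show ?thesis by (auto simp: step_def split: prod.splits)
qed

text \<open>Firing \<open>n_fin\<close> after a successful run leads, by soundness, to another final
  configuration; there every process is back at \<open>n_fin\<close>, which closes a cycle.\<close>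
lemma out_nfin_empty:
  assumes "negotiation N" and "sound N" and "acyclic_nego N"
  shows "out N (nfin N) = {}"
proof (rule ccontr)
  assume "out N (nfin N) \<noteq> {}"
  then obtain a where a: "a \<in> out N (nfin N)" by blast
  have nfin: "nfin N \<in> Nodes N" "ndom N (nfin N) = Proc N"
    using assms(1) unfolding negotiation_def by simp_all
  obtain w C where r: "run N (C_init N) w C" and fin: "is_C_fin N C"
    using sound_reachable_completes[OF assms(2), of "[]"] by auto
  define C2 where "C2 = (\<lambda>p. if p \<in> ndom N (nfin N) then delta N (nfin N) a p else C p)"
  have "step N C (nfin N, a) C2"
    using fin a nfin unfolding step_def enabled_def is_C_fin_def C2_def by auto
  with r have "run N (C_init N) (w @ [(nfin N, a)]) C2" by (auto simp: run_append)
  then obtain w' C3 where r3: "run N C2 w' C3" and fin3: "is_C_fin N C3"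
    using sound_reachable_completes[OF assms(2)] by blast
  obtain p where p: "p \<in> Proc N" using Proc_nonempty[OF assms(1)] by blast
  have "C2 p \<subseteq> descendants N (nfin N)"
    using p nfin a by (auto simp: C2_def graph_edges_def descendants_def)
  from run_preserves_descendants[OF r3 this] have "nfin N \<in> descendants N (nfin N)"
    using fin3 p by (simp add: is_C_fin_def)
  with assms(3) show False
    unfolding acyclic_nego_def acyclic_def descendants_def by blast
qed

definition config_within :: "('p, 'n, 'r) nego \<Rightarrow> 'n set \<Rightarrow> ('p, 'n) config \<Rightarrow> bool" where
  "config_within N R C \<longleftrightarrow> (\<forall>p\<in>Proc N. \<exists>m\<in>R. C p = {m})"

definition strategy_closed :: "('p, 'n, 'r) nego \<Rightarrow> ('n \<Rightarrow> 'r) \<Rightarrow> 'n set \<Rightarrow> bool" where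
  "strategy_closed N \<sigma> R \<longleftrightarrow>
     (\<forall>n\<in>R. n \<noteq> nfin N \<longrightarrow> \<sigma> n \<in> out N n \<and> (\<forall>p\<in>ndom N n. delta N n (\<sigma> n) p \<subseteq> R))"

definition config_height :: "('p, 'n, 'r) nego \<Rightarrow> ('p, 'n) config \<Rightarrow> nat" where
  "config_height N C = (\<Sum>p\<in>Proc N. \<Sum>m\<in>C p. card (descendants N m))"

lemma strategy_step:
  assumes neg: "negotiation N" and acy: "acyclic_nego N" and det: "deterministic N"
    and closed: "strategy_closed N \<sigma> R" and within: "config_within N R C"
    and en: "enabled N C n" and not_fin: "\<not> is_C_fin N C"
  obtains C' where "step N C (n, \<sigma> n) C'" and "n \<in> R" and "config_within N R C'"
    and "config_height N C' < config_height N C"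
proof -
  have nN: "n \<in> Nodes N" and nC: "\<forall>p\<in>ndom N n. n \<in> C p"
    using en by (auto simp: enabled_def)
  have dom_Proc: "ndom N n \<subseteq> Proc N" using ndom_subset_Proc[OF neg nN] .
  have Cn: "C p = {n}" if "p \<in> ndom N n" for p
    using within nC that dom_Proc by (force simp: config_within_def)
  obtain p0 where p0: "p0 \<in> ndom N n" using ndom_nonempty[OF neg nN] by blast
  have nR: "n \<in> R"
    using within p0 dom_Proc Cn[OF p0] by (force simp: config_within_def)
  have "n \<noteq> nfin N"
  proof
    assume "n = nfin N"
    with Cn have "is_C_fin N C"
      using neg by (simp add: is_C_fin_def negotiation_def)
    with not_fin show False ..
  qed
  with closed nR have sn: "\<sigma> n \<in> out N n"
    and succ_R: "\<forall>p\<in>ndom N n. delta N n (\<sigma> n) p \<subseteq> R"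
    by (auto simp: strategy_closed_def)
  define C' where "C' = (\<lambda>p. if p \<in> ndom N n then delta N n (\<sigma> n) p else C p)"
  have st: "step N C (n, \<sigma> n) C'" using en sn by (simp add: step_def C'_def)
  have succ: "\<exists>n'. C' p = {n'} \<and> n' \<in> R \<and> (n, n') \<in> graph_edges N" if p: "p \<in> ndom N n" for p
  proof -
    obtain n' where "delta N n (\<sigma> n) p = {n'}"
      using det nN sn p unfolding deterministic_def by blast
    with p succ_R nN sn show ?thesis by (force simp: C'_def graph_edges_def)
  qed
  have "config_within N R C'"
    using within succ unfolding config_within_def by (metis C'_def)
  moreover have "config_height N C' < config_height N C"
    unfolding config_height_def
  proof (rule sum_strict_mono_ex1)
    show "finite (Proc N)" using neg by (simp add: negotiation_def)
    have less: "(\<Sum>m\<in>C' p. card (descendants N m)) < (\<Sum>m\<in>C p. card (descendants N m))"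
      if "p \<in> ndom N n" for p
      using succ[OF that] Cn[OF that] card_descendants_less[OF neg acy] by auto
    then show "\<forall>p\<in>Proc N. (\<Sum>m\<in>C' p. card (descendants N m)) \<le> (\<Sum>m\<in>C p. card (descendants N m))"
      by (fastforce simp: C'_def)
    show "\<exists>p\<in>Proc N. (\<Sum>m\<in>C' p. card (descendants N m)) < (\<Sum>m\<in>C p. card (descendants N m))"
      using less p0 dom_Proc by blast
  qed
  ultimately show ?thesis using that st nR by blast
qed

lemma strategy_run_completes:
  assumes neg: "negotiation N" and sound: "sound N" and acy: "acyclic_nego N"
    and det: "deterministic N" and closed: "strategy_closed N \<sigma> R"
  shows "run N (C_init N) w0 C \<Longrightarrow> config_within N R C \<Longrightarrow>
    \<exists>w C'. run N C w C' \<and> is_C_fin N C' \<and> config_within N R C' \<and>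
      (\<forall>x\<in>set w. fst x \<in> R \<and> snd x = \<sigma> (fst x))"
proof (induction C arbitrary: w0 rule: measure_induct_rule[of "config_height N"])
  case (less C)
  show ?case
  proof (cases "is_C_fin N C")
    case True
    with less.prems show ?thesis by (intro exI[of _ "[]"]) auto
  next
    case False
    then obtain n where "enabled N C n"
      using sound_reachable_enabled[OF sound less.prems(1)] by blast
    from strategy_step[OF neg acy det closed less.prems(2) this False]
    obtain C' where st: "step N C (n, \<sigma> n) C'" and "n \<in> R" and "config_within N R C'"
      and "config_height N C' < config_height N C" .
    moreover have "run N (C_init N) (w0 @ [(n, \<sigma> n)]) C'"
      using less.prems(1) st by (auto simp: run_append)
    ultimately obtain w C'' where "run N C' w C''" "is_C_fin N C''" "config_within N R C''"
      "\<forall>x\<in>set w. fst x \<in> R \<and> snd x = \<sigma> (fst x)"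
      using less.IH by blast
    with st \<open>n \<in> R\<close> show ?thesis by (intro exI[of _ "(n, \<sigma> n) # w"]) auto
  qed
qed

lemma strategy_successful_run:
  assumes "negotiation N" and "sound N" and "acyclic_nego N" and "deterministic N"
    and "strategy_closed N \<sigma> R" and "ninit N \<in> R"
  obtains w where "successful_run N w" and "run_nodes N w \<subseteq> R"
    and "\<forall>x\<in>set w. snd x = \<sigma> (fst x)"
proof -
  have "config_within N R (C_init N)"
    using assms(6) by (simp add: config_within_def C_init_def)
  then obtain w C where r: "run N (C_init N) w C" and fin: "is_C_fin N C"
    and within: "config_within N R C" and steps: "\<forall>x\<in>set w. fst x \<in> R \<and> snd x = \<sigma> (fst x)"
    using strategy_run_completes[OF assms(1-5), of "[]" "C_init N"] by auto
  obtain p where "p \<in> Proc N" using Proc_nonempty[OF assms(1)] by blast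
  with fin within have "nfin N \<in> R" by (force simp: is_C_fin_def config_within_def)
  with r fin steps that show ?thesis
    unfolding successful_run_def run_nodes_def by blast
qed

lemma run_nodes_final_visits:
  assumes "run N C w C'" and "is_C_fin N C'" and "p \<in> Proc N" and "C p = {m}"
  shows "m \<in> run_nodes N w"
proof (cases "C' p = C p")
  case True
  with assms(2-4) show ?thesis by (simp add: is_C_fin_def run_nodes_def)
next
  case False
  from run_moves_process[OF assms(1) this] assms(4) show ?thesis
    by (force simp: run_nodes_def)
qed

inductive_set strategy_reach :: "('p, 'n, 'r) nego \<Rightarrow> 'n set \<Rightarrow> ('n \<Rightarrow> 'r) \<Rightarrow> 'n set"
  for N B \<sigma> where
  init: "ninit N \<in> strategy_reach N B \<sigma>"
| successor: "n \<in> strategy_reach N B \<sigma> \<Longrightarrow> n \<in> Nodes N - B \<Longrightarrow> \<sigma> n \<in> out N n \<Longrightarrow>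
    p \<in> ndom N n \<Longrightarrow> n' \<in> delta N n (\<sigma> n) p \<Longrightarrow> n' \<in> strategy_reach N B \<sigma>"

lemma strategy_reach_subset_Nodes:
  assumes "negotiation N"
  shows "strategy_reach N B \<sigma> \<subseteq> Nodes N"
proof
  fix n assume "n \<in> strategy_reach N B \<sigma>"
  then show "n \<in> Nodes N"
  proof induction
    case init
    from assms show ?case by (simp add: negotiation_def)
  next
    case successor
    with delta_subset_Nodes[OF assms] show ?case by blast
  qed
qed

lemma strategy_reach_closed:
  assumes "negotiation N" and "det_pos_strategy N \<sigma>" and "strategy_reach N B \<sigma> \<inter> B = {}"
  shows "strategy_closed N \<sigma> (strategy_reach N B \<sigma>)"
proof -
  from assms(1) have "strategy_reach N B \<sigma> \<subseteq> Nodes N" by (rule strategy_reach_subset_Nodes)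
  with assms show ?thesis
    unfolding strategy_closed_def det_pos_strategy_def
    by (blast intro: strategy_reach.successor dest: out_nonempty)
qed

lemma strategy_reach_subset_run_nodes:
  assumes neg: "negotiation N" and "sound N" and "acyclic_nego N" and det: "deterministic N"
    and r: "run N (C_init N) w C" and fin: "is_C_fin N C"
    and steps: "\<forall>x\<in>set w. snd x = \<sigma> (fst x)"
  shows "strategy_reach N B \<sigma> \<subseteq> run_nodes N w"
proof
  fix n assume "n \<in> strategy_reach N B \<sigma>"
  then show "n \<in> run_nodes N w"
  proof induction
    case init
    obtain p where "p \<in> Proc N" using Proc_nonempty[OF neg] by blast
    with r fin show ?case by (rule run_nodes_final_visits) (simp add: C_init_def)
  next
    case (successor n p n')
    have "n \<noteq> nfin N" using successor.hyps(3) out_nfin_empty[OF assms(1-3)] by auto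
    with successor.IH steps have "(n, \<sigma> n) \<in> set w"
      by (auto simp: run_nodes_def)
    then obtain u v where w: "w = u @ (n, \<sigma> n) # v" by (metis split_list)
    with r obtain C1 C2 where st: "step N C1 (n, \<sigma> n) C2" and rv: "run N C2 v C"
      by (auto simp: run_append)
    have "C2 p = {n'}"
      using st successor.hyps(2-5) deterministic_delta[OF det] by (auto simp: step_def)
    moreover have "p \<in> Proc N"
      using ndom_subset_Proc[OF neg] successor.hyps(2,4) by blast
    ultimately have "n' \<in> run_nodes N v"
      using run_nodes_final_visits[OF rv fin] by blast
    with w show ?case by (auto simp: run_nodes_def)
  qed
qed

definition strategy_prefix ::
    "('p, 'n, 'r) nego \<Rightarrow> 'n set \<Rightarrow> ('n \<Rightarrow> 'r) \<Rightarrow> (nat \<Rightarrow> ('n, 'r) pos) \<Rightarrow> nat \<Rightarrow> bool" where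
  "strategy_prefix N B \<sigma> g k \<longleftrightarrow> g 0 = EveP (ninit N) \<and>
     (\<forall>i<k. game_move N B (g i) (g (Suc i)) \<and> (\<forall>n. g i = EveP n \<longrightarrow> g (Suc i) = AdamP n (\<sigma> n)))"

lemma strategy_prefix_mono: "strategy_prefix N B \<sigma> g k \<Longrightarrow> j \<le> k \<Longrightarrow> strategy_prefix N B \<sigma> g j"
  unfolding strategy_prefix_def by auto

lemma fin_play_strategy_prefix:
  "fin_play N B xs \<Longrightarrow> fin_respects \<sigma> xs \<Longrightarrow> k < length xs \<Longrightarrow> strategy_prefix N B \<sigma> ((!) xs) k"
  unfolding fin_play_def fin_respects_def strategy_prefix_def by (auto simp: hd_conv_nth)

lemma inf_play_strategy_prefix:
  "inf_play N B f \<Longrightarrow> inf_respects \<sigma> f \<Longrightarrow> strategy_prefix N B \<sigma> f k"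
  unfolding inf_play_def inf_respects_def strategy_prefix_def by auto

lemma strategy_prefix_last:
  assumes "strategy_prefix N B \<sigma> g k"
  shows "case g k of EveP n \<Rightarrow> n \<in> strategy_reach N B \<sigma>
    | AdamP n a \<Rightarrow> n \<in> strategy_reach N B \<sigma> \<and> n \<in> Nodes N - B \<and> a = \<sigma> n \<and> a \<in> out N n"
  using assms
proof (induction k)
  case 0
  then show ?case by (simp add: strategy_prefix_def strategy_reach.init)
next
  case (Suc k)
  then have IH: "case g k of EveP n \<Rightarrow> n \<in> strategy_reach N B \<sigma>
    | AdamP n a \<Rightarrow> n \<in> strategy_reach N B \<sigma> \<and> n \<in> Nodes N - B \<and> a = \<sigma> n \<and> a \<in> out N n"
    by (simp add: strategy_prefix_mono)
  have mv: "game_move N B (g k) (g (Suc k))"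
    and resp: "\<forall>n. g k = EveP n \<longrightarrow> g (Suc k) = AdamP n (\<sigma> n)"
    using Suc.prems by (auto simp: strategy_prefix_def)
  show ?case
  proof (cases "g k")
    case (EveP n)
    with mv resp IH show ?thesis by (auto simp: game_move_def)
  next
    case (AdamP n a)
    with mv obtain p n' where "p \<in> ndom N n" "n' \<in> delta N n a p" "g (Suc k) = EveP n'"
      by (auto simp: game_move_def)
    with IH AdamP show ?thesis by (auto intro: strategy_reach.successor)
  qed
qed

lemma reached_nodes_subset_strategy_reach: "reached_nodes N B \<sigma> \<subseteq> strategy_reach N B \<sigma>"
proof
  fix n assume "n \<in> reached_nodes N B \<sigma>"
  then obtain g k where "strategy_prefix N B \<sigma> g k" and "g k = EveP n"
    unfolding reached_nodes_def
    by (auto simp: in_set_conv_nth dest: fin_play_strategy_prefix)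
      (metis inf_play_strategy_prefix)
  then show "n \<in> strategy_reach N B \<sigma>"
    using strategy_prefix_last[of N B \<sigma> g k] by simp
qed

lemma strategy_reach_prefix:
  assumes "n \<in> strategy_reach N B \<sigma>"
  shows "\<exists>g k. strategy_prefix N B \<sigma> g k \<and> g k = EveP n"
  using assms
proof induction
  case init
  show ?case
    by (rule exI[of _ "\<lambda>_. EveP (ninit N)"], rule exI[of _ 0]) (simp add: strategy_prefix_def)
next
  case (successor n p n')
  then obtain g k where g: "strategy_prefix N B \<sigma> g k" and gk: "g k = EveP n" by blast
  define g' where "g' = g(Suc k := AdamP n (\<sigma> n), Suc (Suc k) := EveP n')"
  have agree: "g' j = g j" if "j \<le> k" for j
    using that by (simp add: g'_def)
  have "game_move N B (g' i) (g' (Suc i)) \<and> (\<forall>m. g' i = EveP m \<longrightarrow> g' (Suc i) = AdamP m (\<sigma> m))"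
    if i: "i < Suc (Suc k)" for i
  proof -
    consider "i < k" | "i = k" | "i = Suc k" using i by (metis less_SucE)
    then show ?thesis
    proof cases
      case 1
      with g agree[of i] agree[of "Suc i"] show ?thesis by (simp add: strategy_prefix_def)
    next
      case 2
      with gk successor.hyps show ?thesis by (simp add: g'_def game_move_def)
    next
      case 3
      with successor.hyps show ?thesis by (auto simp: g'_def game_move_def)
    qed
  qed
  with g agree[of 0] have "strategy_prefix N B \<sigma> g' (Suc (Suc k))"
    by (simp add: strategy_prefix_def)
  moreover have "g' (Suc (Suc k)) = EveP n'" by (simp add: g'_def)
  ultimately show ?case by blast
qed

text \<open>Eve plays \<open>\<sigma>\<close>, Adam an arbitrary move; the choice is unspecified where no move exists.\<close>
definition strategy_move ::
    "('p, 'n, 'r) nego \<Rightarrow> 'n set \<Rightarrow> ('n \<Rightarrow> 'r) \<Rightarrow> ('n, 'r) pos \<Rightarrow> ('n, 'r) pos" where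
  "strategy_move N B \<sigma> x =
     (case x of EveP n \<Rightarrow> AdamP n (\<sigma> n) | AdamP n a \<Rightarrow> (SOME y. game_move N B x y))"

lemma game_move_strategy_move:
  assumes "det_pos_strategy N \<sigma>" and "game_move N B x y"
  shows "game_move N B x (strategy_move N B \<sigma> x)"
proof (cases x)
  case (EveP n)
  with assms show ?thesis
    by (auto simp: game_move_def strategy_move_def det_pos_strategy_def)
next
  case (AdamP n a)
  with assms(2) show ?thesis by (simp add: strategy_move_def) (rule someI)
qed

lemma strategy_prefix_extends_to_play:
  assumes strat: "det_pos_strategy N \<sigma>" and prefix: "strategy_prefix N B \<sigma> g k"
  shows "(\<exists>xs. fin_play N B xs \<and> fin_respects \<sigma> xs \<and> g k \<in> set xs) \<or>
    (\<exists>f. inf_play N B f \<and> inf_respects \<sigma> f \<and> g k \<in> range f)"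
proof -
  let ?m = "strategy_move N B \<sigma>"
  define f where "f i = (if i \<le> k then g i else (?m ^^ (i - k)) (g k))" for i
  have f_tail: "f i = (?m ^^ (i - k)) (g k)" if "k \<le> i" for i
    using that by (cases "i = k") (auto simp: f_def)
  have f_Suc: "f (Suc i) = ?m (f i)" if "k \<le> i" for i
    using that by (simp add: f_tail Suc_diff_le)
  have f_prefix: "strategy_prefix N B \<sigma> f k" and fk: "f k = g k"
    using prefix by (auto simp: strategy_prefix_def f_def)
  have resp: "inf_respects \<sigma> f"
    unfolding inf_respects_def
  proof (intro allI impI)
    fix i n assume "f i = EveP n"
    then show "f (Suc i) = AdamP n (\<sigma> n)"
      using f_prefix f_Suc[of i] by (cases "i < k") (auto simp: strategy_prefix_def strategy_move_def)
  qed
  show ?thesis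
  proof (cases "\<forall>i. game_move N B (f i) (f (Suc i))")
    case True
    with f_prefix have "inf_play N B f" by (simp add: inf_play_def strategy_prefix_def)
    with resp fk show ?thesis by (metis rangeI)
  next
    case False
    then obtain i where stuck: "\<not> game_move N B (f i) (f (Suc i))"
      and moves: "\<forall>j<i. game_move N B (f j) (f (Suc j))"
      using exists_least_iff[of "\<lambda>i. \<not> game_move N B (f i) (f (Suc i))"] by blast
    have ki: "k \<le> i" using f_prefix stuck by (metis not_le strategy_prefix_def)
    have no_move: "\<not> game_move N B (f i) y" for y
      using game_move_strategy_move[OF strat] f_Suc[OF ki] stuck by metis
    define xs where "xs = map f [0..<Suc i]"
    have "fin_play N B xs"
      using f_prefix moves no_move unfolding fin_play_def xs_def strategy_prefix_def
      by (auto simp: hd_map last_map simp del: upt_Suc)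
    moreover have "fin_respects \<sigma> xs"
      using resp unfolding fin_respects_def inf_respects_def xs_def by (auto simp del: upt_Suc)
    moreover have "g k \<in> set xs"
      using imageI[of k "{0..<Suc i}" f] ki fk by (simp add: xs_def del: upt_Suc)
    ultimately show ?thesis by blast
  qed
qed

lemma strategy_reach_winning:
  assumes win: "winning_strategy N B \<sigma>" and n: "n \<in> strategy_reach N B \<sigma>"
  shows "n \<in> reached_nodes N B \<sigma> \<and> n \<notin> B"
proof -
  obtain g k where "strategy_prefix N B \<sigma> g k" and gk: "g k = EveP n"
    using strategy_reach_prefix[OF n] by blast
  with win strategy_prefix_extends_to_play
  have "(\<exists>xs. fin_play N B xs \<and> fin_respects \<sigma> xs \<and> EveP n \<in> set xs) \<or>
    (\<exists>f. inf_play N B f \<and> inf_respects \<sigma> f \<and> EveP n \<in> range f)"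
    unfolding winning_strategy_def by metis
  then show ?thesis
  proof (elim disjE exE conjE)
    fix xs assume play: "fin_play N B xs" "fin_respects \<sigma> xs" and "EveP n \<in> set xs"
    moreover from play win have "eve_wins N B (set xs)" by (simp add: winning_strategy_def)
    ultimately show ?thesis unfolding reached_nodes_def eve_wins_def by blast
  next
    fix f assume play: "inf_play N B f" "inf_respects \<sigma> f" and "EveP n \<in> range f"
    moreover from play win have "eve_wins N B (range f)" by (simp add: winning_strategy_def)
    ultimately show ?thesis unfolding reached_nodes_def eve_wins_def by blast
  qed
qed

theorem lemma4p3:
  fixes \<N> :: "('p, 'n, 'r) nego" and B :: "'n set" and \<sigma> :: "'n \<Rightarrow> 'r"
  assumes "negotiation \<N>" and "sound \<N>" and "acyclic_nego \<N>" and "deterministic \<N>"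
    and "B \<subseteq> Nodes \<N>"
    and "winning_strategy \<N> B \<sigma>"
  shows "\<exists>w. successful_run \<N> w \<and> run_nodes \<N> w = reached_nodes \<N> B \<sigma>"
proof -
  let ?R = "strategy_reach \<N> B \<sigma>"
  have R_reached: "?R \<subseteq> reached_nodes \<N> B \<sigma>" and avoids_B: "?R \<inter> B = {}"
    using strategy_reach_winning[OF assms(6)] by auto
  have reached: "reached_nodes \<N> B \<sigma> = ?R"
    using reached_nodes_subset_strategy_reach R_reached by (rule subset_antisym)
  have "det_pos_strategy \<N> \<sigma>" using assms(6) by (simp add: winning_strategy_def)
  with assms(1) have "strategy_closed \<N> \<sigma> ?R" using avoids_B by (rule strategy_reach_closed)
  then obtain w where run: "successful_run \<N> w" and "run_nodes \<N> w \<subseteq> ?R"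
    and steps: "\<forall>x\<in>set w. snd x = \<sigma> (fst x)"
    using strategy_successful_run[OF assms(1-4) _ strategy_reach.init] by blast
  moreover from run obtain C where "run \<N> (C_init \<N>) w C" and "is_C_fin \<N> C"
    unfolding successful_run_def by blast
  then have "?R \<subseteq> run_nodes \<N> w"
    using strategy_reach_subset_run_nodes[OF assms(1-4) _ _ steps] by blast
  ultimately show ?thesis using reached by blast
qed

end
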